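(* Let $P\in\Delta_{\mathcal{T},\mathcal{X},\mathcal{Y}}$ and let $Q_1,Q_2\in\Delta_P$ both be maximizers of $H_Q(T\mid X,Y)$ over $Q\in\Delta_P$. Then $Q_1(T\mid X,Y)=Q_2(T\mid X,Y)$.
   Context: $T,X,Y$ are random variables with finite state spaces $\mathcal{T},\mathcal{X},\mathcal{Y}$; $\Delta_{\mathcal{T},\mathcal{X},\mathcal{Y}}$ is the set of all joint distributions on $\mathcal{T}\times\mathcal{X}\times\mathcal{Y}$. For $P\in\Delta_{\mathcal{T},\mathcal{X},\mathcal{Y}}$, $\Delta_P=\{Q\in\Delta_{\mathcal{T},\mathcal{X},\mathcal{Y}}: Q(X=x,T=t)=P(X=x,T=t),\ Q(Y=y,T=t)=P(Y=y,T=t)\ \forall x,y,t\}$. $H_Q(T\mid X,Y)$ is the conditional entropy under $Q$; equality of conditionals is understood almost everywhere. *)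

theory Defs
  imports "HOL-Analysis.Analysis"
begin

definition is_dist :: "('t::finite \<times> 'x::finite \<times> 'y::finite \<Rightarrow> real) \<Rightarrow> bool" where
  "is_dist Q \<longleftrightarrow> (\<forall>z. 0 \<le> Q z) \<and> (\<Sum>z\<in>UNIV. Q z) = 1"

definition marg_XT :: "('t::finite \<times> 'x::finite \<times> 'y::finite \<Rightarrow> real) \<Rightarrow> 'x \<Rightarrow> 't \<Rightarrow> real" where
  "marg_XT Q x t = (\<Sum>y\<in>UNIV. Q (t, x, y))"

definition marg_YT :: "('t::finite \<times> 'x::finite \<times> 'y::finite \<Rightarrow> real) \<Rightarrow> 'y \<Rightarrow> 't \<Rightarrow> real" where
  "marg_YT Q y t = (\<Sum>x\<in>UNIV. Q (t, x, y))"

definition marg_XY :: "('t::finite \<times> 'x::finite \<times> 'y::finite \<Rightarrow> real) \<Rightarrow> 'x \<Rightarrow> 'y \<Rightarrow> real" where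
  "marg_XY Q x y = (\<Sum>t\<in>UNIV. Q (t, x, y))"

definition Delta_P :: "('t::finite \<times> 'x::finite \<times> 'y::finite \<Rightarrow> real) \<Rightarrow> ('t \<times> 'x \<times> 'y \<Rightarrow> real) set" where
  "Delta_P P = {Q. is_dist Q \<and> (\<forall>x t. marg_XT Q x t = marg_XT P x t) \<and> (\<forall>y t. marg_YT Q y t = marg_YT P y t)}"

definition cond_T_XY :: "('t::finite \<times> 'x::finite \<times> 'y::finite \<Rightarrow> real) \<Rightarrow> 't \<Rightarrow> 'x \<Rightarrow> 'y \<Rightarrow> real" where
  "cond_T_XY Q t x y = Q (t, x, y) / marg_XY Q x y"

definition cond_entropy_T_XY :: "('t::finite \<times> 'x::finite \<times> 'y::finite \<Rightarrow> real) \<Rightarrow> real" where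
  "cond_entropy_T_XY Q = - (\<Sum>(t, x, y)\<in>UNIV.
      (if Q (t, x, y) = 0 then 0 else Q (t, x, y) * ln (cond_T_XY Q t x y)))"

end

theory Submission
  imports Defs
begin

text \<open>The constraints defining Delta_P are linear, so the midpoint of two maximizers is again
feasible. Writing H(T|X,Y) = - \<Sum> Q(t,x,y) ln (Q(t,x,y) / Q(x,y)), the joint convexity of
a ln (a / A) (the log-sum inequality) makes H concave, and strictly so in every summand where the
two conditionals differ on a common support point. Hence differing conditionals would give the
midpoint a strictly larger entropy than the common maximal value.\<close>

lemma ln_less_minus_one:
  fixes x :: real
  assumes "0 < x" "x \<noteq> 1"
  shows "ln x < x - 1"
proof -
  have "ln x \<noteq> x - 1" using ln_eq_minus_one assms by blast
  with ln_le_minus_one[OF assms(1)] show ?thesis by linarith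
qed

definition kl_summand :: "real \<Rightarrow> real \<Rightarrow> real" where
  "kl_summand a A = (if a = 0 then 0 else a * ln (a / A))"

lemma kl_summand_scale: "0 \<le> c \<Longrightarrow> kl_summand (c * a) (c * A) = c * kl_summand a A"
  by (auto simp: kl_summand_def)

lemma kl_summand_minus_tangent:
  fixes a A r :: real
  assumes "0 < a" "0 < A" "0 < r"
  shows "kl_summand a A - (a * ln r + a - A * r) = a * ((A * r / a - 1) - ln (A * r / a))"
proof -
  have "kl_summand a A = a * ln a - a * ln A"
    using assms by (simp add: kl_summand_def ln_div right_diff_distrib)
  moreover have "a * ln (A * r / a) = a * ln A + a * ln r - a * ln a"
    using assms by (simp add: ln_div ln_mult algebra_simps)
  moreover have "a * (A * r / a - 1) = A * r - a"
    using assms by (simp add: field_simps)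
  moreover have "a * ((A * r / a - 1) - ln (A * r / a)) = a * (A * r / a - 1) - a * ln (A * r / a)"
    by (rule right_diff_distrib)
  ultimately show ?thesis by linarith
qed

lemma kl_summand_ge_tangent:
  fixes a A r :: real
  assumes "0 \<le> a" "a \<le> A" "0 < r"
  shows "a * ln r + a - A * r \<le> kl_summand a A"
proof (cases "a = 0")
  case True
  then show ?thesis using assms by (simp add: kl_summand_def)
next
  case False
  with assms have "0 < a" "0 < A" by auto
  then have "ln (A * r / a) \<le> A * r / a - 1"
    using assms by (intro ln_le_minus_one) simp
  with \<open>0 < a\<close> have "0 \<le> a * ((A * r / a - 1) - ln (A * r / a))"
    by simp
  then show ?thesis
    using kl_summand_minus_tangent[of a A r] \<open>0 < a\<close> assms by simp
qed

lemma kl_summand_gt_tangent: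
  fixes a A r :: real
  assumes "0 \<le> a" "0 < A" "0 < r" "a \<noteq> A * r"
  shows "a * ln r + a - A * r < kl_summand a A"
proof (cases "a = 0")
  case True
  then show ?thesis using assms by (simp add: kl_summand_def)
next
  case False
  with assms have "0 < a" by auto
  moreover have "A * r / a \<noteq> 1" using assms False by (simp add: field_simps)
  ultimately have "ln (A * r / a) < A * r / a - 1"
    using assms by (intro ln_less_minus_one) simp_all
  with \<open>0 < a\<close> have "0 < a * ((A * r / a - 1) - ln (A * r / a))"
    by simp
  then show ?thesis
    using kl_summand_minus_tangent[of a A r] \<open>0 < a\<close> assms by simp
qed

lemma kl_summand_add_split:
  fixes a b A B :: real
  defines "r \<equiv> (a + b) / (A + B)"
  assumes "a + b \<noteq> 0" "A + B \<noteq> 0"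
  shows "kl_summand (a + b) (A + B) = (a * ln r + a - A * r) + (b * ln r + b - B * r)"
proof -
  have "kl_summand (a + b) (A + B) = (a + b) * ln r + (a + b) - (A + B) * r"
    using assms by (simp add: kl_summand_def r_def)
  then show ?thesis
    by (simp add: algebra_simps)
qed

lemma log_sum_inequality:
  fixes a b A B :: real
  assumes "0 \<le> a" "a \<le> A" "0 \<le> b" "b \<le> B"
  shows "kl_summand (a + b) (A + B) \<le> kl_summand a A + kl_summand b B"
proof (cases "a + b = 0")
  case True
  then show ?thesis using assms by (simp add: kl_summand_def)
next
  case False
  define r where "r = (a + b) / (A + B)"
  have "A + B \<noteq> 0" "0 < r" using False assms by (simp_all add: r_def)
  then have "(a * ln r + a - A * r) + (b * ln r + b - B * r) \<le> kl_summand a A + kl_summand b B"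
    using assms by (intro add_mono kl_summand_ge_tangent)
  then show ?thesis
    using kl_summand_add_split[OF False \<open>A + B \<noteq> 0\<close>] by (simp add: r_def)
qed

lemma log_sum_inequality_strict:
  fixes a b A B :: real
  assumes "0 \<le> a" "a \<le> A" "0 \<le> b" "b \<le> B" "0 < A" "0 < B" "a / A \<noteq> b / B"
  shows "kl_summand (a + b) (A + B) < kl_summand a A + kl_summand b B"
proof -
  define r where "r = (a + b) / (A + B)"
  have "a + b \<noteq> 0" "A + B \<noteq> 0" using assms by (auto simp: add_nonneg_eq_0_iff)
  then have "0 < r" using assms by (simp add: r_def)
  have "(a * ln r + a - A * r) + (b * ln r + b - B * r) < kl_summand a A + kl_summand b B"
  proof (cases "a = A * r")
    case True
    with assms have "b \<noteq> B * r" by auto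
    with True \<open>0 < r\<close> assms show ?thesis
      by (intro add_le_less_mono kl_summand_ge_tangent kl_summand_gt_tangent) auto
  next
    case False
    with \<open>0 < r\<close> assms show ?thesis
      by (intro add_less_le_mono kl_summand_ge_tangent kl_summand_gt_tangent) auto
  qed
  then show ?thesis
    using kl_summand_add_split[OF \<open>a + b \<noteq> 0\<close> \<open>A + B \<noteq> 0\<close>] by (simp add: r_def)
qed

lemma kl_summand_convex:
  fixes \<theta> a b A B :: real
  assumes "0 \<le> \<theta>" "\<theta> \<le> 1" "0 \<le> a" "a \<le> A" "0 \<le> b" "b \<le> B"
  shows "kl_summand (\<theta> * a + (1 - \<theta>) * b) (\<theta> * A + (1 - \<theta>) * B)
           \<le> \<theta> * kl_summand a A + (1 - \<theta>) * kl_summand b B"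
  using log_sum_inequality[of "\<theta> * a" "\<theta> * A" "(1 - \<theta>) * b" "(1 - \<theta>) * B"] assms
  by (simp add: kl_summand_scale mult_left_mono)

lemma kl_summand_strictly_convex:
  fixes \<theta> a b A B :: real
  assumes "0 < \<theta>" "\<theta> < 1" "0 \<le> a" "a \<le> A" "0 \<le> b" "b \<le> B" "0 < A" "0 < B"
    and "a / A \<noteq> b / B"
  shows "kl_summand (\<theta> * a + (1 - \<theta>) * b) (\<theta> * A + (1 - \<theta>) * B)
           < \<theta> * kl_summand a A + (1 - \<theta>) * kl_summand b B"
  using log_sum_inequality_strict[of "\<theta> * a" "\<theta> * A" "(1 - \<theta>) * b" "(1 - \<theta>) * B"] assms
  by (simp add: kl_summand_scale mult_left_mono)

definition mix :: "real \<Rightarrow> ('a \<Rightarrow> real) \<Rightarrow> ('a \<Rightarrow> real) \<Rightarrow> 'a \<Rightarrow> real" where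
  "mix \<theta> Q1 Q2 z = \<theta> * Q1 z + (1 - \<theta>) * Q2 z"

lemma sum_mix:
  "(\<Sum>z\<in>A. mix \<theta> Q1 Q2 (h z)) = \<theta> * (\<Sum>z\<in>A. Q1 (h z)) + (1 - \<theta>) * (\<Sum>z\<in>A. Q2 (h z))"
  by (simp add: mix_def sum.distrib sum_distrib_left)

lemma marg_XY_mix: "marg_XY (mix \<theta> Q1 Q2) x y = \<theta> * marg_XY Q1 x y + (1 - \<theta>) * marg_XY Q2 x y"
  unfolding marg_XY_def by (rule sum_mix)

lemma marg_XT_mix: "marg_XT (mix \<theta> Q1 Q2) x t = \<theta> * marg_XT Q1 x t + (1 - \<theta>) * marg_XT Q2 x t"
  unfolding marg_XT_def by (rule sum_mix)

lemma marg_YT_mix: "marg_YT (mix \<theta> Q1 Q2) y t = \<theta> * marg_YT Q1 y t + (1 - \<theta>) * marg_YT Q2 y t"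
  unfolding marg_YT_def by (rule sum_mix)

lemma is_dist_mix:
  assumes "is_dist Q1" "is_dist Q2" "0 \<le> \<theta>" "\<theta> \<le> 1"
  shows "is_dist (mix \<theta> Q1 Q2)"
  using assms sum_mix[of \<theta> Q1 Q2 id UNIV] by (simp add: is_dist_def mix_def)

lemma Delta_P_mix:
  assumes "Q1 \<in> Delta_P P" "Q2 \<in> Delta_P P" "0 \<le> \<theta>" "\<theta> \<le> 1"
  shows "mix \<theta> Q1 Q2 \<in> Delta_P P"
  using assms is_dist_mix[of Q1 Q2 \<theta>] by (simp add: Delta_P_def marg_XT_mix marg_YT_mix algebra_simps)

lemma le_marg_XY: "is_dist Q \<Longrightarrow> Q (t, x, y) \<le> marg_XY Q x y"
  unfolding marg_XY_def is_dist_def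
  by (rule member_le_sum[where f = "\<lambda>t. Q (t, x, y)"]) auto

lemma cond_entropy_T_XY_eq_sum_kl:
  "cond_entropy_T_XY Q = - (\<Sum>(t, x, y)\<in>UNIV. kl_summand (Q (t, x, y)) (marg_XY Q x y))"
  unfolding cond_entropy_T_XY_def kl_summand_def cond_T_XY_def by simp

lemma cond_entropy_T_XY_mix_gt:
  assumes "is_dist Q1" "is_dist Q2" "0 < \<theta>" "\<theta> < 1"
    and "0 < marg_XY Q1 x0 y0" "0 < marg_XY Q2 x0 y0"
    and "cond_T_XY Q1 t0 x0 y0 \<noteq> cond_T_XY Q2 t0 x0 y0"
  shows "\<theta> * cond_entropy_T_XY Q1 + (1 - \<theta>) * cond_entropy_T_XY Q2
           < cond_entropy_T_XY (mix \<theta> Q1 Q2)"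
proof -
  let ?kl = "\<lambda>Q (t, x, y). kl_summand (Q (t, x, y)) (marg_XY Q x y)"
  let ?rhs = "\<lambda>z. \<theta> * ?kl Q1 z + (1 - \<theta>) * ?kl Q2 z"
  have dist: "0 \<le> Q1 z" "0 \<le> Q2 z" for z
    using assms(1,2) unfolding is_dist_def by blast+
  have le: "?kl (mix \<theta> Q1 Q2) (t, x, y) \<le> ?rhs (t, x, y)" for t x y
    unfolding marg_XY_mix mix_def prod.case
    using assms le_marg_XY dist by (intro kl_summand_convex) auto
  have lt: "?kl (mix \<theta> Q1 Q2) (t0, x0, y0) < ?rhs (t0, x0, y0)"
    unfolding marg_XY_mix mix_def prod.case
    using assms le_marg_XY dist by (intro kl_summand_strictly_convex) (auto simp: cond_T_XY_def)
  have "(\<Sum>z\<in>UNIV. ?kl (mix \<theta> Q1 Q2) z) < (\<Sum>z\<in>UNIV. ?rhs z)"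
    using le lt by (intro sum_strict_mono_ex1) auto
  then show ?thesis
    unfolding cond_entropy_T_XY_eq_sum_kl
    by (simp add: sum_distrib_left sum.distrib)
qed

theorem mainTheorem7:
  fixes P Q1 Q2 :: "'t::finite \<times> 'x::finite \<times> 'y::finite \<Rightarrow> real"
  assumes "is_dist P"
    and "Q1 \<in> Delta_P P" and "Q2 \<in> Delta_P P"
    and "\<forall>Q\<in>Delta_P P. cond_entropy_T_XY Q \<le> cond_entropy_T_XY Q1"
    and "\<forall>Q\<in>Delta_P P. cond_entropy_T_XY Q \<le> cond_entropy_T_XY Q2"
  shows "\<forall>t x y. marg_XY Q1 x y > 0 \<and> marg_XY Q2 x y > 0 \<longrightarrow>
           cond_T_XY Q1 t x y = cond_T_XY Q2 t x y"
proof (intro allI impI; erule conjE; rule ccontr)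
  fix t x y
  assume "marg_XY Q1 x y > 0" "marg_XY Q2 x y > 0" "cond_T_XY Q1 t x y \<noteq> cond_T_XY Q2 t x y"
  moreover have "is_dist Q1" "is_dist Q2" using assms(2,3) by (auto simp: Delta_P_def)
  ultimately have "cond_entropy_T_XY Q1 / 2 + cond_entropy_T_XY Q2 / 2
                     < cond_entropy_T_XY (mix (1/2) Q1 Q2)"
    using cond_entropy_T_XY_mix_gt[of Q1 Q2 "1/2"] by simp
  moreover have "cond_entropy_T_XY (mix (1/2) Q1 Q2) \<le> cond_entropy_T_XY Q1"
    using assms(2-4) Delta_P_mix[of Q1 P Q2 "1/2"] by simp
  moreover have "cond_entropy_T_XY Q1 = cond_entropy_T_XY Q2"
    using assms(2-5) by fastforce
  ultimately show False by linarith
qed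

end
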